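(* Let $u,v:\mathbb{Z}\times[0,1]\to\mathbb{R}$ have at most polynomial growth in their first variable, let $u$ be upper-semicontinuous (in $t$) and a viscosity subsolution, and $v$ lower-semicontinuous and a viscosity supersolution, of $-w_t(y,t)-\beta(w(y+1,t)-2w(y,t)+w(y-1,t))=0$ on $\mathbb{Z}\times[0,1)$. If $u(\cdot,1)\le v(\cdot,1)$, then $u\le v$ on $\mathbb{Z}\times[0,1)$.
   Context: $\beta>0$. A function $w$ on $\mathbb{Z}\times[0,1]$ has at most polynomial growth if $|w(y,t)|\le C(1+|y|^k)$ for some $C,k$. For locally bounded $w$, $w^*(y,t)=\limsup_{t'\to t}w(y,t')$ and $w_*(y,t)=\liminf_{t'\to t}w(y,t')$. $w$ is a viscosity subsolution (resp. supersolution) of the equation if for every $(y,t)\in\mathbb{Z}\times[0,1)$ and every $\varphi:\mathbb{Z}\times[0,1]\to\mathbb{R}$ continuously differentiable in $t$ such that $(y,t)$ is a maximum point of $w^*-\varphi$ (resp. minimum point of $w_*-\varphi$), one has $-\varphi_t(y,t)-\beta(w^*(y+1,t)-2w^*(y,t)+w^*(y-1,t))\le0$ (resp. $-\varphi_t(y,t)-\beta(w_*(y+1,t)-2w_*(y,t)+w_*(y-1,t))\ge0$). *)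

theory Defs
  imports "HOL-Analysis.Analysis"
begin

text \<open>Functions on Z x [0,1] are modelled as w :: int => real => real; only
  values with t in [0,1] matter.\<close>

definition poly_growth :: "(int \<Rightarrow> real \<Rightarrow> real) \<Rightarrow> bool" where
  "poly_growth w \<longleftrightarrow> (\<exists>C (k::nat). \<forall>y. \<forall>t\<in>{0..1}. \<bar>w y t\<bar> \<le> C * (1 + \<bar>real_of_int y\<bar> ^ k))"

definition usc_in_t :: "(int \<Rightarrow> real \<Rightarrow> real) \<Rightarrow> bool" where
  "usc_in_t w \<longleftrightarrow> (\<forall>y. \<forall>t\<in>{0..1}. \<forall>e>0. \<exists>d>0. \<forall>t'\<in>{0..1}.
      \<bar>t' - t\<bar> < d \<longrightarrow> w y t' < w y t + e)"

definition lsc_in_t :: "(int \<Rightarrow> real \<Rightarrow> real) \<Rightarrow> bool" where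
  "lsc_in_t w \<longleftrightarrow> (\<forall>y. \<forall>t\<in>{0..1}. \<forall>e>0. \<exists>d>0. \<forall>t'\<in>{0..1}.
      \<bar>t' - t\<bar> < d \<longrightarrow> w y t - e < w y t')"

definition usc_env :: "(int \<Rightarrow> real \<Rightarrow> real) \<Rightarrow> int \<Rightarrow> real \<Rightarrow> real" where
  "usc_env w y t = (INF d\<in>{0<..}. SUP t'\<in>{t'\<in>{0..1}. \<bar>t' - t\<bar> < d}. w y t')"

definition lsc_env :: "(int \<Rightarrow> real \<Rightarrow> real) \<Rightarrow> int \<Rightarrow> real \<Rightarrow> real" where
  "lsc_env w y t = (SUP d\<in>{0<..}. INF t'\<in>{t'\<in>{0..1}. \<bar>t' - t\<bar> < d}. w y t')"

definition test_fun :: "(int \<Rightarrow> real \<Rightarrow> real) \<Rightarrow> (int \<Rightarrow> real \<Rightarrow> real) \<Rightarrow> bool" where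
  "test_fun \<phi> \<phi>' \<longleftrightarrow> (\<forall>y. (\<forall>s\<in>{0..1}. (\<phi> y has_real_derivative \<phi>' y s) (at s within {0..1}))
      \<and> continuous_on {0..1} (\<phi>' y))"

definition visc_sub :: "real \<Rightarrow> (int \<Rightarrow> real \<Rightarrow> real) \<Rightarrow> bool" where
  "visc_sub \<beta> w \<longleftrightarrow> (\<forall>y t \<phi> \<phi>'. t \<in> {0..<1} \<and> test_fun \<phi> \<phi>' \<and>
      (\<forall>z. \<forall>s\<in>{0..1}. usc_env w z s - \<phi> z s \<le> usc_env w y t - \<phi> y t) \<longrightarrow>
      - \<phi>' y t - \<beta> * (usc_env w (y+1) t - 2 * usc_env w y t + usc_env w (y-1) t) \<le> 0)"

definition visc_super :: "real \<Rightarrow> (int \<Rightarrow> real \<Rightarrow> real) \<Rightarrow> bool" where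
  "visc_super \<beta> w \<longleftrightarrow> (\<forall>y t \<phi> \<phi>'. t \<in> {0..<1} \<and> test_fun \<phi> \<phi>' \<and>
      (\<forall>z. \<forall>s\<in>{0..1}. lsc_env w z s - \<phi> z s \<ge> lsc_env w y t - \<phi> y t) \<longrightarrow>
      - \<phi>' y t - \<beta> * (lsc_env w (y+1) t - 2 * lsc_env w y t + lsc_env w (y-1) t) \<ge> 0)"

end

theory Submission
  imports Defs
begin

text \<open>Double the time variable: if u - v were positive somewhere, then
  u y t - v y s - (t - s)^2 / (2 \<epsilon>) - \<delta> exp (- K t) cosh y
  has a positive maximum. Polynomial growth lets cosh y confine it to finitely many
  sites, where it is attained by semicontinuity; for small \<epsilon> the quadratic term and
  the terminal inequality keep both times below 1. There the sub- and supersolution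
  inequalities apply to the test functions obtained by freezing the other variable,
  and since the discrete Laplacian of cosh is 2 (cosh 1 - 1) cosh, a time decay
  K > 2 \<beta> (cosh 1 - 1) of the penalty makes them contradict each other.\<close>

lemma usc_env_eq:
  assumes usc: "usc_in_t w" and bdd: "bdd_above (w y ` {0..1})" and t: "t \<in> {0..1}"
  shows "usc_env w y t = w y t"
proof -
  define B where "B d = {t'\<in>{0..1}. \<bar>t' - t\<bar> < d}" for d :: real
  have t_in: "t \<in> B d" if "d > 0" for d using that t by (simp add: B_def)
  have bdd_B: "bdd_above (w y ` B d)" for d
    by (rule bdd_above_mono[OF bdd]) (auto simp: B_def)
  have sup_ge: "w y t \<le> (SUP t'\<in>B d. w y t')" if "d > 0" for d
    using cSUP_upper[OF t_in[OF that] bdd_B] .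
  have "(INF d\<in>{0<..}. SUP t'\<in>B d. w y t') \<le> w y t"
  proof (rule field_le_epsilon)
    fix e :: real assume "0 < e"
    then obtain d where d: "d > 0" "\<forall>t'\<in>B d. w y t' < w y t + e"
      using usc t unfolding usc_in_t_def B_def by blast
    have "(INF d\<in>{0<..}. SUP t'\<in>B d. w y t') \<le> (SUP t'\<in>B d. w y t')"
      using d(1) sup_ge by (intro cINF_lower bdd_belowI2[where m = "w y t"]) auto
    also have "\<dots> \<le> w y t + e"
      using t_in[OF d(1)] d(2) by (intro cSUP_least) (auto intro: less_imp_le)
    finally show "(INF d\<in>{0<..}. SUP t'\<in>B d. w y t') \<le> w y t + e" .
  qed
  moreover have "w y t \<le> (INF d\<in>{0<..}. SUP t'\<in>B d. w y t')"
    using sup_ge by (intro cINF_greatest) auto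
  ultimately show ?thesis unfolding usc_env_def B_def[symmetric] by linarith
qed

lemma lsc_in_t_iff_uminus: "lsc_in_t w \<longleftrightarrow> usc_in_t (\<lambda>z s. - w z s)"
  unfolding lsc_in_t_def usc_in_t_def by (simp add: algebra_simps)

lemma lsc_env_eq_uminus: "lsc_env w y t = - usc_env (\<lambda>z s. - w z s) y t"
  by (simp add: lsc_env_def usc_env_def Inf_real_def image_image)

lemma lsc_env_eq:
  assumes "lsc_in_t w" "bdd_below (w y ` {0..1})" "t \<in> {0..1}"
  shows "lsc_env w y t = w y t"
  using usc_env_eq[of "\<lambda>z s. - w z s" y t] assms
  by (simp add: lsc_env_eq_uminus lsc_in_t_iff_uminus bdd_above_uminus_image)

lemma usc_attains_sup:
  fixes f :: "'a::topological_space \<Rightarrow> real"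
  assumes "compact S" "S \<noteq> {}"
    and usc: "\<And>x c. x \<in> S \<Longrightarrow> f x < c \<Longrightarrow> \<exists>U. open U \<and> x \<in> U \<and> (\<forall>x'\<in>S \<inter> U. f x' < c)"
  shows "\<exists>x\<in>S. \<forall>x'\<in>S. f x' \<le> f x"
proof (rule ccontr)
  assume "\<not> ?thesis"
  then have "\<forall>x\<in>S. \<exists>g U. g \<in> S \<and> f x < f g \<and> open U \<and> x \<in> U \<and> (\<forall>x'\<in>S \<inter> U. f x' < f g)"
    using usc by (metis not_le)
  then obtain g U where gU: "\<And>x. x \<in> S \<Longrightarrow> g x \<in> S \<and> f x < f (g x) \<and> open (U x) \<and> x \<in> U x
      \<and> (\<forall>x'\<in>S \<inter> U x. f x' < f (g x))"
    by metis
  obtain T where T: "T \<subseteq> S" "finite T" "S \<subseteq> (\<Union>x\<in>T. U x)"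
    by (rule compactE_image[OF assms(1), of S U]) (use gU in auto)
  have "T \<noteq> {}" using T(3) assms(2) by auto
  define m where "m = Max ((\<lambda>x. f (g x)) ` T)"
  have "m \<in> (\<lambda>x. f (g x)) ` T" unfolding m_def using T(2) \<open>T \<noteq> {}\<close> by (intro Max_in) auto
  then obtain x0 where x0: "x0 \<in> T" "f (g x0) = m" by auto
  then obtain x1 where "x1 \<in> T" "g x0 \<in> U x1" using T gU by blast
  then have "f (g x0) < f (g x1)" using gU T(1) x0(1) by blast
  moreover have "f (g x1) \<le> m" using T(2) \<open>x1 \<in> T\<close> unfolding m_def by (intro Max_ge) auto
  ultimately show False using x0 by simp
qed

lemma usc_minus_lsc_attains_sup:
  fixes g :: "int \<Rightarrow> real \<Rightarrow> real \<Rightarrow> real"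
  assumes usc: "usc_in_t u" and lsc: "lsc_in_t v" and Y: "finite Y" "Y \<noteq> {}"
    and g: "\<And>y. continuous_on UNIV (\<lambda>(t, s). g y t s)"
  shows "\<exists>yb\<in>Y. \<exists>tb\<in>{0..1}. \<exists>sb\<in>{0..1}. \<forall>y\<in>Y. \<forall>t\<in>{0..1}. \<forall>s\<in>{0..1}.
           u y t - v y s - g y t s \<le> u yb tb - v yb sb - g yb tb sb"
proof -
  define f where "f = (\<lambda>(y, t, s). u y t - v y s - g y t s)"
  define S where "S = Y \<times> {0..1::real} \<times> {0..1::real}"
  have "\<exists>p\<in>S. \<forall>q\<in>S. f q \<le> f p"
  proof (rule usc_attains_sup)
    show "compact S"
      unfolding S_def using \<open>finite Y\<close> by (intro compact_Times finite_imp_compact compact_Icc)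
    show "S \<noteq> {}" unfolding S_def using Y(2) by auto
  next
    fix p c assume "p \<in> S" "f p < c"
    then obtain y t s where p: "p = (y, t, s)" "y \<in> Y" "t \<in> {0..1}" "s \<in> {0..1}"
      unfolding S_def by auto
    define \<gamma> where "\<gamma> = (c - f p) / 3"
    have "\<gamma> > 0" using \<open>f p < c\<close> by (simp add: \<gamma>_def)
    obtain d1 where d1: "d1 > 0" "\<forall>t'\<in>{0..1}. \<bar>t' - t\<bar> < d1 \<longrightarrow> u y t' < u y t + \<gamma>"
      using usc p(3) \<open>\<gamma> > 0\<close> unfolding usc_in_t_def by blast
    obtain d2 where d2: "d2 > 0" "\<forall>s'\<in>{0..1}. \<bar>s' - s\<bar> < d2 \<longrightarrow> v y s - \<gamma> < v y s'"
      using lsc p(4) \<open>\<gamma> > 0\<close> unfolding lsc_in_t_def by blast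
    define U where "U = {y} \<times> ({(t', s'). g y t s - \<gamma> < g y t' s'} \<inter> ball t d1 \<times> ball s d2)"
    have "open {(t', s'). g y t s - \<gamma> < g y t' s'}"
      using open_Collect_less[OF continuous_on_const g] by (simp add: case_prod_beta')
    then have "open U"
      unfolding U_def by (intro open_Times open_Int open_discrete open_ball) auto
    moreover have "p \<in> U" using p d1(1) d2(1) \<open>\<gamma> > 0\<close> by (simp add: U_def)
    moreover have "f q < c" if qSU: "q \<in> S \<inter> U" for q
    proof -
      obtain t' s' where q: "q = (y, t', s')" using qSU by (auto simp: U_def)
      have "t' \<in> {0..1}" "s' \<in> {0..1}" using qSU q by (auto simp: S_def)
      moreover have "\<bar>t' - t\<bar> < d1" "\<bar>s' - s\<bar> < d2" "g y t s - \<gamma> < g y t' s'"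
        using qSU q by (auto simp: U_def dist_real_def abs_minus_commute)
      ultimately have "u y t' < u y t + \<gamma>" "v y s - \<gamma> < v y s'" "g y t s - \<gamma> < g y t' s'"
        using d1(2) d2(2) by auto
      moreover have "c = u y t - v y s - g y t s + 3 * \<gamma>" by (simp add: \<gamma>_def f_def p(1) field_simps)
      ultimately show ?thesis by (simp add: f_def q)
    qed
    ultimately show "\<exists>U. open U \<and> p \<in> U \<and> (\<forall>q\<in>S \<inter> U. f q < c)" by blast
  qed
  then show ?thesis unfolding S_def f_def by fastforce
qed

lemma usc_in_t_eventually:
  assumes "usc_in_t w" "t \<in> {0..1}" "e > 0"
  shows "eventually (\<lambda>t'. t' \<in> {0..1} \<longrightarrow> w y t' < w y t + e) (nhds t)"
  using assms unfolding usc_in_t_def eventually_nhds_metric dist_real_def by blast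

lemma lsc_in_t_eventually:
  assumes "lsc_in_t w" "t \<in> {0..1}" "e > 0"
  shows "eventually (\<lambda>t'. t' \<in> {0..1} \<longrightarrow> w y t - e < w y t') (nhds t)"
  using assms unfolding lsc_in_t_def eventually_nhds_metric dist_real_def by blast

lemma usc_lsc_in_t_uniform_on_finite:
  assumes usc: "usc_in_t u" and lsc: "lsc_in_t v" and "finite Y" and t0: "t0 \<in> {0..1}" and "e > 0"
  shows "\<exists>d>0. \<forall>y\<in>Y. \<forall>t\<in>{0..1}. \<bar>t - t0\<bar> < d \<longrightarrow> u y t < u y t0 + e \<and> v y t0 - e < v y t"
proof -
  have "eventually (\<lambda>t. t \<in> {0..1} \<longrightarrow> u y t < u y t0 + e \<and> v y t0 - e < v y t) (nhds t0)" for y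
    using eventually_conj[OF usc_in_t_eventually[OF usc t0 \<open>e > 0\<close>] lsc_in_t_eventually[OF lsc t0 \<open>e > 0\<close>]]
    by (rule eventually_mono) auto
  then have "eventually (\<lambda>t. \<forall>y\<in>Y. t \<in> {0..1} \<longrightarrow> u y t < u y t0 + e \<and> v y t0 - e < v y t) (nhds t0)"
    using \<open>finite Y\<close> by (intro eventually_ball_finite) auto
  then show ?thesis unfolding eventually_nhds_metric dist_real_def by blast
qed

lemma poly_growth_imp_bounded: "poly_growth w \<Longrightarrow> bounded (w y ` {0..1})"
  unfolding poly_growth_def bounded_iff by (auto simp: real_norm_def)

lemma poly_growth_bounded_on_finite:
  assumes "poly_growth w" "finite Y"
  shows "\<exists>M. \<forall>y\<in>Y. \<forall>t\<in>{0..1}. \<bar>w y t\<bar> \<le> M"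
proof -
  have "bounded (\<Union>y\<in>Y. w y ` {0..1})" using assms poly_growth_imp_bounded by blast
  then show ?thesis unfolding bounded_iff by auto
qed

lemma poly_growth_below_cosh:
  assumes "poly_growth w" "D > 0"
  shows "\<exists>N. \<forall>y. \<forall>t\<in>{0..1}. N < \<bar>real_of_int y\<bar> \<longrightarrow> \<bar>w y t\<bar> < D * cosh (real_of_int y)"
proof -
  obtain C k where C: "\<forall>y. \<forall>t\<in>{0..1}. \<bar>w y t\<bar> \<le> C * (1 + \<bar>real_of_int y\<bar> ^ k)"
    using assms(1) unfolding poly_growth_def by blast
  have "((\<lambda>x. C * (x ^ 0 / exp x + x ^ k / exp x)) \<longlongrightarrow> C * (0 + 0)) at_top"
    by (intro tendsto_intros tendsto_power_div_exp_0)
  then have "eventually (\<lambda>x. C * (x ^ 0 / exp x + x ^ k / exp x) < D / 2) at_top"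
    using assms(2) by (intro order_tendstoD(2)) auto
  then obtain N where N: "\<And>x. x \<ge> N \<Longrightarrow> C * (1 + x ^ k) < D / 2 * exp x"
    by (auto simp: eventually_at_top_linorder add_divide_distrib[symmetric] divide_simps)
  have "\<bar>w y t\<bar> < D * cosh (real_of_int y)" if "t \<in> {0..1}" "N < \<bar>real_of_int y\<bar>" for y t
  proof -
    have "\<bar>w y t\<bar> \<le> C * (1 + \<bar>real_of_int y\<bar> ^ k)" using C that(1) by blast
    also have "\<dots> < D / 2 * exp \<bar>real_of_int y\<bar>" using N that(2) by simp
    also have "\<dots> \<le> D * cosh (real_of_int y)"
      using \<open>D > 0\<close> by (cases "y \<ge> 0") (simp_all add: cosh_def)
    finally show ?thesis .
  qed
  then show ?thesis by blast
qed

lemma cosh_second_difference: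
  "cosh (x + 1) + cosh (x - 1) - 2 * cosh x = 2 * (cosh 1 - 1) * cosh (x :: real)"
  by (simp add: cosh_add cosh_diff algebra_simps)

lemma test_fun_quadratic:
  "test_fun (\<lambda>z t. a z + p * (t - b)\<^sup>2) (\<lambda>z t. 2 * p * (t - b))"
  unfolding test_fun_def
  by (auto intro!: derivative_eq_intros continuous_intros simp: algebra_simps power2_eq_square)

lemma test_fun_quadratic_exp:
  "test_fun (\<lambda>z t. a z + p * (t - b)\<^sup>2 + c z * exp (- K * t))
            (\<lambda>z t. 2 * p * (t - b) - K * c z * exp (- K * t))"
  unfolding test_fun_def
  by (auto intro!: derivative_eq_intros continuous_intros simp: algebra_simps power2_eq_square)

definition doubling ::
    "(int \<Rightarrow> real \<Rightarrow> real) \<Rightarrow> (int \<Rightarrow> real \<Rightarrow> real) \<Rightarrow> real \<Rightarrow> real \<Rightarrow> real \<Rightarrow> int \<Rightarrow> real \<Rightarrow> real \<Rightarrow> real"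
  where "doubling u v \<epsilon> \<delta> K y t s =
    u y t - v y s - (t - s)\<^sup>2 / (2 * \<epsilon>) - \<delta> * exp (- K * t) * cosh (real_of_int y)"

lemma doubling_negative_off_finite:
  assumes gu: "poly_growth u" and gv: "poly_growth v" and "K \<ge> 0" "\<delta> > 0"
  shows "\<exists>Y. finite Y \<and> (\<forall>y \<epsilon> t s. y \<notin> Y \<longrightarrow> \<epsilon> > 0 \<longrightarrow> t \<in> {0..1} \<longrightarrow> s \<in> {0..1} \<longrightarrow>
           doubling u v \<epsilon> \<delta> K y t s < 0)"
proof -
  define D where "D = \<delta> * exp (- K) / 2"
  have "D > 0" using \<open>\<delta> > 0\<close> by (simp add: D_def)
  obtain Nu where Nu: "\<forall>y. \<forall>t\<in>{0..1}. Nu < \<bar>real_of_int y\<bar> \<longrightarrow> \<bar>u y t\<bar> < D * cosh (real_of_int y)"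
    using poly_growth_below_cosh[OF gu \<open>D > 0\<close>] by blast
  obtain Nv where Nv: "\<forall>y. \<forall>t\<in>{0..1}. Nv < \<bar>real_of_int y\<bar> \<longrightarrow> \<bar>v y t\<bar> < D * cosh (real_of_int y)"
    using poly_growth_below_cosh[OF gv \<open>D > 0\<close>] by blast
  define N where "N = max Nu Nv"
  have "finite {y::int. \<bar>real_of_int y\<bar> \<le> N}"
    by (rule finite_subset[of _ "{- \<lceil>N\<rceil>..\<lceil>N\<rceil>}"]) (auto simp: abs_le_iff, linarith+)
  moreover have "doubling u v \<epsilon> \<delta> K y t s < 0"
    if "\<not> \<bar>real_of_int y\<bar> \<le> N" "\<epsilon> > 0" "t \<in> {0..1}" "s \<in> {0..1}" for y \<epsilon> t s
  proof -
    have "\<bar>u y t\<bar> < D * cosh (real_of_int y)" "\<bar>v y s\<bar> < D * cosh (real_of_int y)"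
      using Nu Nv that by (auto simp: N_def)
    then have "\<bar>u y t\<bar> + \<bar>v y s\<bar> < \<delta> * exp (- K) * cosh (real_of_int y)"
      by (simp add: D_def)
    also have "\<dots> \<le> \<delta> * exp (- K * t) * cosh (real_of_int y)"
      using \<open>K \<ge> 0\<close> \<open>\<delta> > 0\<close> that(3) by (simp add: mult_left_le)
    moreover have "(t - s)\<^sup>2 / (2 * \<epsilon>) \<ge> 0" using \<open>\<epsilon> > 0\<close> by simp
    ultimately show ?thesis
      using abs_ge_self[of "u y t"] abs_ge_minus_self[of "v y s"] by (simp add: doubling_def)
  qed
  ultimately show ?thesis by (intro exI[of _ "{y. \<bar>real_of_int y\<bar> \<le> N}"]) blast
qed

lemma doubling_attains_sup:
  assumes usc: "usc_in_t u" and lsc: "lsc_in_t v" and gu: "poly_growth u" and gv: "poly_growth v"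
    and "K \<ge> 0" "\<delta> > 0" "\<epsilon> > 0"
    and t0: "t0 \<in> {0..1}" and pos: "doubling u v \<epsilon> \<delta> K y0 t0 t0 > 0"
  shows "\<exists>yb. \<exists>tb\<in>{0..1}. \<exists>sb\<in>{0..1}. \<forall>y. \<forall>t\<in>{0..1}. \<forall>s\<in>{0..1}.
           doubling u v \<epsilon> \<delta> K y t s \<le> doubling u v \<epsilon> \<delta> K yb tb sb"
proof -
  obtain Y where "finite Y" and Y_neg: "\<And>y t s. y \<notin> Y \<Longrightarrow> t \<in> {0..1} \<Longrightarrow> s \<in> {0..1} \<Longrightarrow>
      doubling u v \<epsilon> \<delta> K y t s < 0"
    using doubling_negative_off_finite[OF gu gv \<open>K \<ge> 0\<close> \<open>\<delta> > 0\<close>] \<open>\<epsilon> > 0\<close> by meson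
  have "y0 \<in> Y" using Y_neg[OF _ t0 t0] pos by (meson less_asym)
  define g where "g y t s = (t - s)\<^sup>2 / (2 * \<epsilon>) + \<delta> * exp (- K * t) * cosh (real_of_int y)" for y t s
  have "continuous_on UNIV (\<lambda>(t, s). g y t s)" for y
    unfolding g_def case_prod_beta' by (intro continuous_intros) (use \<open>\<epsilon> > 0\<close> in auto)
  moreover have "doubling u v \<epsilon> \<delta> K y t s = u y t - v y s - g y t s" for y t s
    by (simp add: doubling_def g_def)
  ultimately obtain yb tb sb where b: "yb \<in> Y" "tb \<in> {0..1}" "sb \<in> {0..1}"
    and max_Y: "\<And>y t s. y \<in> Y \<Longrightarrow> t \<in> {0..1} \<Longrightarrow> s \<in> {0..1} \<Longrightarrow>
      doubling u v \<epsilon> \<delta> K y t s \<le> doubling u v \<epsilon> \<delta> K yb tb sb"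
    using usc_minus_lsc_attains_sup[OF usc lsc \<open>finite Y\<close>, of g] \<open>y0 \<in> Y\<close> by (metis empty_iff)
  have "0 < doubling u v \<epsilon> \<delta> K yb tb sb" using max_Y[OF \<open>y0 \<in> Y\<close> t0 t0] pos by simp
  then have "doubling u v \<epsilon> \<delta> K y t s \<le> doubling u v \<epsilon> \<delta> K yb tb sb"
    if "t \<in> {0..1}" "s \<in> {0..1}" for y t s
  proof (cases "y \<in> Y")
    case False
    with Y_neg[OF _ that] \<open>0 < doubling u v \<epsilon> \<delta> K yb tb sb\<close> show ?thesis by fastforce
  qed (use max_Y[OF _ that] in blast)
  with b show ?thesis by blast
qed

lemma doubling_plus_quadratic_le:
  "\<delta> \<ge> 0 \<Longrightarrow> doubling u v \<epsilon> \<delta> K y t s + (t - s)\<^sup>2 / (2 * \<epsilon>) \<le> u y t - v y s"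
  by (simp add: doubling_def)

lemma doubling_attains_sup_before_terminal:
  assumes usc: "usc_in_t u" and lsc: "lsc_in_t v" and gu: "poly_growth u" and gv: "poly_growth v"
    and terminal: "\<forall>y. u y 1 \<le> v y 1" and "K \<ge> 0" "\<delta> > 0"
    and t0: "t0 \<in> {0..1}" and pos: "0 < u y0 t0 - v y0 t0 - \<delta> * exp (- K * t0) * cosh (real_of_int y0)"
  shows "\<exists>\<epsilon>>0. \<exists>yb. \<exists>tb\<in>{0..<1}. \<exists>sb\<in>{0..<1}. \<forall>y. \<forall>t\<in>{0..1}. \<forall>s\<in>{0..1}.
           doubling u v \<epsilon> \<delta> K y t s \<le> doubling u v \<epsilon> \<delta> K yb tb sb"
proof -
  define m where "m = u y0 t0 - v y0 t0 - \<delta> * exp (- K * t0) * cosh (real_of_int y0)"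
  have "m > 0" using pos by (simp add: m_def)
  have m_eq: "doubling u v \<epsilon> \<delta> K y0 t0 t0 = m" for \<epsilon> by (simp add: doubling_def m_def)
  obtain Y where "finite Y" and Y_neg: "\<And>y \<epsilon> t s. y \<notin> Y \<Longrightarrow> \<epsilon> > 0 \<Longrightarrow> t \<in> {0..1} \<Longrightarrow> s \<in> {0..1} \<Longrightarrow>
      doubling u v \<epsilon> \<delta> K y t s < 0"
    using doubling_negative_off_finite[OF gu gv \<open>K \<ge> 0\<close> \<open>\<delta> > 0\<close>] by meson
  obtain Mu Mv where Mu: "\<forall>y\<in>Y. \<forall>t\<in>{0..1}. \<bar>u y t\<bar> \<le> Mu" and Mv: "\<forall>y\<in>Y. \<forall>t\<in>{0..1}. \<bar>v y t\<bar> \<le> Mv"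
    using poly_growth_bounded_on_finite[OF gu \<open>finite Y\<close>] poly_growth_bounded_on_finite[OF gv \<open>finite Y\<close>]
    by blast
  define M where "M = max 0 (Mu + Mv)"
  have "M \<ge> 0" by (simp add: M_def)
  obtain d where "d > 0" and d: "\<And>y t. y \<in> Y \<Longrightarrow> t \<in> {0..1} \<Longrightarrow> \<bar>t - 1\<bar> < d \<Longrightarrow>
      u y t < u y 1 + m / 2 \<and> v y 1 - m / 2 < v y t"
    using usc_lsc_in_t_uniform_on_finite[OF usc lsc \<open>finite Y\<close>, of 1 "m / 2"] \<open>m > 0\<close> by auto
  define \<epsilon> where "\<epsilon> = d\<^sup>2 / (2 * M + 2)"
  have "\<epsilon> > 0" using \<open>d > 0\<close> \<open>M \<ge> 0\<close> by (simp add: \<epsilon>_def)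
  obtain yb tb sb where b: "tb \<in> {0..1}" "sb \<in> {0..1}" and max: "\<And>y t s. t \<in> {0..1} \<Longrightarrow> s \<in> {0..1} \<Longrightarrow>
      doubling u v \<epsilon> \<delta> K y t s \<le> doubling u v \<epsilon> \<delta> K yb tb sb"
    using doubling_attains_sup[OF usc lsc gu gv \<open>K \<ge> 0\<close> \<open>\<delta> > 0\<close> \<open>\<epsilon> > 0\<close> t0] m_eq \<open>m > 0\<close> by metis
  have big: "m \<le> doubling u v \<epsilon> \<delta> K yb tb sb" using max[OF t0 t0, of y0] m_eq[of \<epsilon>] by simp
  then have "yb \<in> Y" using Y_neg[OF _ \<open>\<epsilon> > 0\<close> b] \<open>m > 0\<close> by (meson less_asym less_le_trans)
  have upper: "m + (tb - sb)\<^sup>2 / (2 * \<epsilon>) \<le> u yb tb - v yb sb"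
    using big doubling_plus_quadratic_le[of \<delta> u v \<epsilon> K yb tb sb] \<open>\<delta> > 0\<close> by linarith
  have "\<bar>tb - sb\<bar> < d"
  proof -
    have "(tb - sb)\<^sup>2 / (2 * \<epsilon>) \<le> M"
      using upper \<open>m > 0\<close> Mu Mv \<open>yb \<in> Y\<close> b abs_ge_self[of "u yb tb"] abs_ge_minus_self[of "v yb sb"]
      unfolding M_def by fastforce
    then have "\<bar>tb - sb\<bar>\<^sup>2 \<le> d\<^sup>2 * (M / (M + 1))"
      using \<open>\<epsilon> > 0\<close> \<open>M \<ge> 0\<close> by (simp add: \<epsilon>_def field_simps)
    also have "\<dots> < d\<^sup>2" using \<open>d > 0\<close> \<open>M \<ge> 0\<close> by (simp add: field_simps)
    finally show ?thesis using power_less_imp_less_base[of "\<bar>tb - sb\<bar>" 2 d] \<open>d > 0\<close> by simp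
  qed
  have "(tb - sb)\<^sup>2 / (2 * \<epsilon>) \<ge> 0" using \<open>\<epsilon> > 0\<close> by simp
  with upper terminal[rule_format, of yb] \<open>m > 0\<close>
  have not_both: "\<not> (u yb tb < u yb 1 + m / 2 \<and> v yb 1 - m / 2 < v yb sb)" by linarith
  have "tb < 1"
  proof (rule ccontr)
    assume "\<not> tb < 1"
    with b have "tb = 1" by simp
    then show False
      using not_both d[OF \<open>yb \<in> Y\<close> b(2)] \<open>\<bar>tb - sb\<bar> < d\<close> \<open>m > 0\<close> by (simp add: abs_minus_commute)
  qed
  moreover have "sb < 1"
  proof (rule ccontr)
    assume "\<not> sb < 1"
    with b have "sb = 1" by simp
    then show False using not_both d[OF \<open>yb \<in> Y\<close> b(1)] \<open>\<bar>tb - sb\<bar> < d\<close> \<open>m > 0\<close> by simp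
  qed
  ultimately show ?thesis using \<open>\<epsilon> > 0\<close> b max by (metis atLeastAtMost_iff atLeastLessThan_iff)
qed

lemma doubling_no_interior_max:
  assumes "\<beta> \<ge> 0" and K: "2 * \<beta> * (cosh 1 - 1) < K" and "\<epsilon> > 0" "\<delta> > 0"
    and sub: "visc_sub \<beta> u" and super: "visc_super \<beta> v"
    and u_env: "\<And>y t. t \<in> {0..1} \<Longrightarrow> usc_env u y t = u y t"
    and v_env: "\<And>y t. t \<in> {0..1} \<Longrightarrow> lsc_env v y t = v y t"
    and tb: "tb \<in> {0..<1}" and sb: "sb \<in> {0..<1}"
    and max: "\<And>y t s. t \<in> {0..1} \<Longrightarrow> s \<in> {0..1} \<Longrightarrow>
      doubling u v \<epsilon> \<delta> K y t s \<le> doubling u v \<epsilon> \<delta> K yb tb sb"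
  shows False
proof -
  have tb01: "tb \<in> {0..1}" and sb01: "sb \<in> {0..1}" using tb sb by auto
  define q where "q = (tb - sb) / \<epsilon>"
  define a where "a = \<delta> * exp (- K * tb) * cosh (real_of_int yb)"
  define Lu where "Lu = u (yb + 1) tb - 2 * u yb tb + u (yb - 1) tb"
  define Lv where "Lv = v (yb + 1) sb - 2 * v yb sb + v (yb - 1) sb"
  \<comment> \<open>u - \<phi> below is doubling with s frozen at sb, hence maximal at (yb, tb); dually for v.\<close>
  have sub_ineq: "- (q - K * a) - \<beta> * Lu \<le> 0"
  proof -
    define \<phi> where "\<phi> = (\<lambda>z t. v z sb + 1 / (2 * \<epsilon>) * (t - sb)\<^sup>2 + \<delta> * cosh (real_of_int z) * exp (- K * t))"
    define \<phi>' where "\<phi>' = (\<lambda>z t. 2 * (1 / (2 * \<epsilon>)) * (t - sb) - K * (\<delta> * cosh (real_of_int z)) * exp (- K * t))"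
    have "test_fun \<phi> \<phi>'" unfolding \<phi>_def \<phi>'_def by (rule test_fun_quadratic_exp)
    moreover have "usc_env u z t - \<phi> z t \<le> usc_env u yb tb - \<phi> yb tb" if "t \<in> {0..1}" for z t
      using max[OF that sb01, of z] by (simp add: u_env[OF that] u_env[OF tb01] doubling_def \<phi>_def algebra_simps)
    ultimately have "- \<phi>' yb tb - \<beta> * (usc_env u (yb + 1) tb - 2 * usc_env u yb tb + usc_env u (yb - 1) tb) \<le> 0"
      using sub tb unfolding visc_sub_def by blast
    then show ?thesis using \<open>\<epsilon> > 0\<close> by (simp add: u_env[OF tb01] \<phi>'_def q_def a_def Lu_def algebra_simps)
  qed
  have super_ineq: "- q - \<beta> * Lv \<ge> 0"
  proof -
    define \<phi> where "\<phi> = (\<lambda>z s. (u z tb - \<delta> * exp (- K * tb) * cosh (real_of_int z)) + - 1 / (2 * \<epsilon>) * (s - tb)\<^sup>2)"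
    define \<phi>' :: "int \<Rightarrow> real \<Rightarrow> real" where "\<phi>' = (\<lambda>z s. 2 * (- 1 / (2 * \<epsilon>)) * (s - tb))"
    have "test_fun \<phi> \<phi>'" unfolding \<phi>_def \<phi>'_def by (rule test_fun_quadratic)
    moreover have "lsc_env v z s - \<phi> z s \<ge> lsc_env v yb sb - \<phi> yb sb" if "s \<in> {0..1}" for z s
      using max[OF tb01 that, of z] by (simp add: v_env[OF that] v_env[OF sb01] doubling_def \<phi>_def power2_commute algebra_simps)
    ultimately have "- \<phi>' yb sb - \<beta> * (lsc_env v (yb + 1) sb - 2 * lsc_env v yb sb + lsc_env v (yb - 1) sb) \<ge> 0"
      using super sb unfolding visc_super_def by blast
    then show ?thesis using \<open>\<epsilon> > 0\<close> by (simp add: v_env[OF sb01] \<phi>'_def q_def Lv_def field_simps)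
  qed
  have "Lu - Lv \<le> 2 * (cosh 1 - 1) * a"
  proof -
    have "doubling u v \<epsilon> \<delta> K (yb + 1) tb sb + doubling u v \<epsilon> \<delta> K (yb - 1) tb sb
          \<le> 2 * doubling u v \<epsilon> \<delta> K yb tb sb"
      using max[OF tb01 sb01, of "yb + 1"] max[OF tb01 sb01, of "yb - 1"] by simp
    then have "Lu - Lv \<le> \<delta> * exp (- K * tb) *
        (cosh (real_of_int yb + 1) + cosh (real_of_int yb - 1) - 2 * cosh (real_of_int yb))"
      by (simp add: doubling_def Lu_def Lv_def algebra_simps)
    then show ?thesis unfolding cosh_second_difference by (simp add: a_def algebra_simps)
  qed
  then have "\<beta> * (Lu - Lv) \<le> \<beta> * (2 * (cosh 1 - 1) * a)"
    using \<open>\<beta> \<ge> 0\<close> by (rule mult_left_mono)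
  then have "K * a \<le> (2 * \<beta> * (cosh 1 - 1)) * a"
    using sub_ineq super_ineq right_diff_distrib[of \<beta> Lu Lv] by (simp add: ac_simps)
  moreover have "a > 0" using \<open>\<delta> > 0\<close> by (simp add: a_def)
  ultimately show False using K by simp
qed

theorem lemmaA3:
  fixes \<beta> :: real and u v :: "int \<Rightarrow> real \<Rightarrow> real"
  assumes "\<beta> > 0"
    and "poly_growth u" and "poly_growth v"
    and "usc_in_t u" and "lsc_in_t v"
    and "visc_sub \<beta> u" and "visc_super \<beta> v"
    and "\<forall>y. u y 1 \<le> v y 1"
  shows "\<forall>y. \<forall>t\<in>{0..<1}. u y t \<le> v y t"
proof (rule ccontr)
  assume "\<not> ?thesis"
  then obtain y0 t0 where t0: "t0 \<in> {0..<1}" and "u y0 t0 > v y0 t0" by (auto simp: not_le)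
  define \<eta> where "\<eta> = u y0 t0 - v y0 t0"
  define K where "K = 4 * \<beta> * (cosh 1 - 1)"
  define \<delta> where "\<delta> = \<eta> / (2 * cosh (real_of_int y0))"
  have "\<eta> > 0" "\<delta> > 0" using \<open>u y0 t0 > v y0 t0\<close> by (simp_all add: \<eta>_def \<delta>_def)
  have "cosh (1::real) > 1" using cosh_real_ge_1[of 1] cosh_real_one_iff[of 1] by linarith
  then have "K \<ge> 0" "2 * \<beta> * (cosh 1 - 1) < K" using \<open>\<beta> > 0\<close> by (simp_all add: K_def)
  have "exp (- K * t0) \<le> 1" using \<open>K \<ge> 0\<close> t0 by simp
  then have "\<delta> * exp (- K * t0) * cosh (real_of_int y0) \<le> \<eta> / 2"
    using \<open>\<eta> > 0\<close> by (simp add: \<delta>_def mult_left_le)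
  then have "0 < u y0 t0 - v y0 t0 - \<delta> * exp (- K * t0) * cosh (real_of_int y0)"
    using \<open>\<eta> > 0\<close> by (simp add: \<eta>_def)
  moreover have "t0 \<in> {0..1}" using t0 by simp
  ultimately obtain \<epsilon> yb tb sb where "\<epsilon> > 0" "tb \<in> {0..<1}" "sb \<in> {0..<1}"
    and max: "\<forall>y. \<forall>t\<in>{0..1}. \<forall>s\<in>{0..1}. doubling u v \<epsilon> \<delta> K y t s \<le> doubling u v \<epsilon> \<delta> K yb tb sb"
    using doubling_attains_sup_before_terminal[OF assms(4,5,2,3,8) \<open>K \<ge> 0\<close> \<open>\<delta> > 0\<close>] by blast
  have u_env: "usc_env u y t = u y t" and v_env: "lsc_env v y t = v y t" if "t \<in> {0..1}" for y t
    using usc_env_eq[OF assms(4) _ that] lsc_env_eq[OF assms(5) _ that]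
      poly_growth_imp_bounded[OF assms(2)] poly_growth_imp_bounded[OF assms(3)]
    by (simp_all add: bounded_imp_bdd_above bounded_imp_bdd_below)
  show False
    using doubling_no_interior_max[OF less_imp_le[OF assms(1)] \<open>2 * \<beta> * (cosh 1 - 1) < K\<close>
        \<open>\<epsilon> > 0\<close> \<open>\<delta> > 0\<close> assms(6,7) u_env v_env \<open>tb \<in> {0..<1}\<close> \<open>sb \<in> {0..<1}\<close>] max
    by blast
qed

end
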